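(* Let $k\ge2$, $n>2^k$, $c=2^k-2$, and assume $d=\gcd(c,n-1)>1$; let $w=(n-1)/d$. Define $y\in\mathbb{R}^V$ by $y_v=0$ if $v=m d$ for some integer $m\ge 0$, and $y_v=\frac{1}{w(d-1)}$ otherwise. Then $y$ is a probability distribution on $V$, $\sum_{v\in C(T)}y_v\le \frac{c}{n-1}$ for every $T\in\mathcal{T}_k$, and $\max_{T\in\mathcal{T}_k}\sum_{v\in C(T)}y_v=\frac{c}{n-1}$. Hence the pair $(x,y)$ is a Nash equilibrium of the search game, where $x$ is the output of the Greedy Algorithm.
   Context: $G$ is the path graph with $V=\{0,\dots,n-1\}$ and edges $\{v,v+1\}$, $0\le v\le n-2$. A search strategy for a tree $H$ is a rooted binary tree defined recursively: a single node is a search strategy for any $H$; otherwise the root is labeled with an edge $uv$ of $H$ and its two child subtrees are search strategies for the components $H_u,H_v$ of $H-uv$ containing $u,v$. Nodes get vertex sets: root gets $V(H)$, children of a root labeled $uv$ get $V(H_u),V(H_v)$, recursively. $C(T)$ (covered set) is the set of $v$ with $V(\lambda)=\{v\}$ for a leaf $\lambda$ of $T$. $\mathcal{T}_k$ is the set of search strategies for $G$ of height (max root-to-leaf edge count) at most $k$. Intervals: $[u\oplus\ell]_r=\{w\bmod r: u\le w\le u+\ell-1\}$, subscript omitted when $r=n$. For $v\in V\setminus\{1\}$, $T_v\in\mathcal{T}_k$ denotes a strategy with $C(T_v)=[v\oplus(c+1)]$ if this interval meets $\{0,n-1\}$ and $C(T_v)=[v\oplus c]$ otherwise (such strategies exist).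 Greedy Algorithm: $v=c+1$, $\mathcal{X}=\{T_0\}$; while $v\notin\{0,1\}$: add $T_v$ to $\mathcal{X}$, set $v=(v+c)\bmod(n-1)$. Output $x$ uniform on $\mathcal{X}$. The search game: the seeker chooses $x\in\Delta_k$ (distribution on $\mathcal{T}_k$), the hider $y\in\Delta_V$ (distribution on $V$); the seeker's payoff (hider's cost) is $\sum_{T}\sum_{v} x_T y_v\,\mathbf 1[v\in C(T)]$. A Nash equilibrium is a pair $(x,y)$ where neither player can improve unilaterally. *)

theory Defs
  imports Main "HOL-Library.Multiset" Complex_Main
begin

text \<open>Path graph G on V = {0..<n}, edges {v, v+1}. The sub-paths arising in a search
strategy are intervals {a..b}. A search strategy is a rooted binary tree; an inner node
labelled e stands for the edge {e, e+1}; its left child is a strategy for the component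
{a..e} (containing e), its right child for {e+1..b} (containing e+1).\<close>

datatype stree = Leaf | Node nat stree stree

fun valid :: "nat \<Rightarrow> nat \<Rightarrow> stree \<Rightarrow> bool" where
  "valid a b Leaf = (a \<le> b)"
| "valid a b (Node e L R) = (a \<le> e \<and> e < b \<and> valid a e L \<and> valid (Suc e) b R)"

text \<open>Covered set: vertices v such that some leaf has vertex set {v}.\<close>
fun cov :: "nat \<Rightarrow> nat \<Rightarrow> stree \<Rightarrow> nat set" where
  "cov a b Leaf = (if a = b then {a} else {})"
| "cov a b (Node e L R) = cov a e L \<union> cov (Suc e) b R"

fun height :: "stree \<Rightarrow> nat" where
  "height Leaf = 0"
| "height (Node e L R) = Suc (max (height L) (height R))"

definition C :: "nat \<Rightarrow> stree \<Rightarrow> nat set" where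
  "C n T = cov 0 (n - 1) T"

definition strategies :: "nat \<Rightarrow> nat \<Rightarrow> stree set" where
  "strategies n k = {T. valid 0 (n - 1) T \<and> height T \<le> k}"

definition ival :: "nat \<Rightarrow> nat \<Rightarrow> nat \<Rightarrow> nat set" where
  "ival u l r = {w mod r | w. u \<le> w \<and> w < u + l}"

definition Tv_cover :: "nat \<Rightarrow> nat \<Rightarrow> nat \<Rightarrow> nat set" where
  "Tv_cover n c v = (if ival v (c + 1) n \<inter> {0, n - 1} \<noteq> {} then ival v (c + 1) n else ival v c n)"

fun gseq :: "nat \<Rightarrow> nat \<Rightarrow> nat \<Rightarrow> nat" where
  "gseq n c 0 = c + 1"
| "gseq n c (Suc j) = (gseq n c j + c) mod (n - 1)"

text \<open>Vertices v for which T_v is added to \<X> (including v = 0 for the initial T_0):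
the loop adds T_{v_j} exactly when none of v_0, ..., v_j lies in {0,1}.\<close>
definition greedy_verts :: "nat \<Rightarrow> nat \<Rightarrow> nat set" where
  "greedy_verts n c = {0} \<union> {gseq n c j | j. \<forall>i\<le>j. gseq n c i \<notin> {0, 1}}"

definition greedy_set :: "nat \<Rightarrow> nat \<Rightarrow> (nat \<Rightarrow> stree) \<Rightarrow> stree set" where
  "greedy_set n c Tv = Tv ` greedy_verts n c"

definition greedy_x :: "nat \<Rightarrow> nat \<Rightarrow> (nat \<Rightarrow> stree) \<Rightarrow> stree \<Rightarrow> real" where
  "greedy_x n c Tv T = (if T \<in> greedy_set n c Tv then 1 / real (card (greedy_set n c Tv)) else 0)"

definition prob_dist :: "'a set \<Rightarrow> ('a \<Rightarrow> real) \<Rightarrow> bool" where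
  "prob_dist S p \<longleftrightarrow> (\<forall>s\<in>S. 0 \<le> p s) \<and> (\<Sum>s\<in>S. p s) = 1"

definition payoff :: "nat \<Rightarrow> nat \<Rightarrow> (stree \<Rightarrow> real) \<Rightarrow> (nat \<Rightarrow> real) \<Rightarrow> real" where
  "payoff n k x y = (\<Sum>T\<in>strategies n k. \<Sum>v\<in>{0..<n}. x T * y v * (if v \<in> C n T then 1 else 0))"

definition nash :: "nat \<Rightarrow> nat \<Rightarrow> (stree \<Rightarrow> real) \<Rightarrow> (nat \<Rightarrow> real) \<Rightarrow> bool" where
  "nash n k x y \<longleftrightarrow> prob_dist (strategies n k) x \<and> prob_dist {0..<n} y \<and>
     (\<forall>x'. prob_dist (strategies n k) x' \<longrightarrow> payoff n k x' y \<le> payoff n k x y) \<and>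
     (\<forall>y'. prob_dist {0..<n} y' \<longrightarrow> payoff n k x y \<le> payoff n k x y')"

end

theory Submission
  imports Defs
begin

text \<open>
  The potential of a covered set counts its elements, its maximal runs not
  starting at the left end, and an uncovered right end. Cutting the path at an edge does not
  decrease the total potential of the two parts, so a strategy of height k has potential at
  most 2^k = c + 2. Covered non-multiples of d come in stretches of at most d - 1 between
  multiples, so covering t of them costs more than t d/(d - 1) units of potential. Hence at
  most (c/d)(d - 1) non-multiples of d are covered, and against y, uniform on the w(d - 1)
  non-multiples, every strategy has value at most c/(n - 1).

  Identifying the end vertices 0 and n - 1 turns the path into a cycle of length
  n - 1 = w d. The greedy strategies cover blocks of c consecutive positions starting at
  1, 1 + c, 1 + 2c, ...; since c/d and w are coprime, the walk first returns to 1 after w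
  steps, and the w blocks wind exactly c/d times around the cycle. So every vertex lies in at
  least c/d of the w strategies, and x covers every vertex with probability at least
  c/(n - 1). The two bounds make (x, y) a saddle point, and by complementary slackness the
  strategies in the support of x attain the maximum.
\<close>

lemma cov_subset: "valid a b T \<Longrightarrow> cov a b T \<subseteq> {a..b}"
proof (induction T arbitrary: a b)
  case (Node e L R)
  then show ?case by fastforce
qed simp

lemma finite_valid_height: "finite {T. valid a b T \<and> height T \<le> k}"
proof (induction k arbitrary: a b)
  case 0
  have "{T. valid a b T \<and> height T \<le> 0} \<subseteq> {Leaf}"
    by (auto elim: height.elims)
  then show ?case using finite_subset by blast
next
  case (Suc k)
  let ?sub = "\<lambda>a b. {T. valid a b T \<and> height T \<le> k}"
  have "{T. valid a b T \<and> height T \<le> Suc k}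
      \<subseteq> insert Leaf (\<Union>e\<in>{a..<b}. (\<lambda>(L, R). Node e L R) ` (?sub a e \<times> ?sub (Suc e) b))"
  proof
    fix T assume "T \<in> {T. valid a b T \<and> height T \<le> Suc k}"
    then show "T \<in> insert Leaf (\<Union>e\<in>{a..<b}. (\<lambda>(L, R). Node e L R) ` (?sub a e \<times> ?sub (Suc e) b))"
      by (cases T) auto
  qed
  then show ?case by (rule finite_subset) (use Suc.IH in auto)
qed

lemma finite_strategies: "finite (strategies n k)"
  unfolding strategies_def by (rule finite_valid_height)

lemma C_subset: "0 < n \<Longrightarrow> T \<in> strategies n k \<Longrightarrow> C n T \<subseteq> {0..<n}"
  unfolding C_def strategies_def using cov_subset by fastforce

definition run_weight :: "nat set \<Rightarrow> nat \<Rightarrow> nat \<Rightarrow> nat" where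
  "run_weight S a u = (if u \<in> S then 1 else 0) + (if u \<in> S \<and> a < u \<and> u - 1 \<notin> S then 1 else 0)"

definition cover_potential :: "nat set \<Rightarrow> nat \<Rightarrow> nat \<Rightarrow> nat" where
  "cover_potential S a b = (\<Sum>u\<in>{a..b}. run_weight S a u) + (if b \<in> S then 0 else 1)"

lemma cover_potential_union_le:
  assumes "a \<le> e" "e < b" and S1: "S1 \<subseteq> {a..e}" and S2: "S2 \<subseteq> {Suc e..b}"
  shows "cover_potential (S1 \<union> S2) a b \<le> cover_potential S1 a e + cover_potential S2 (Suc e) b"
proof -
  let ?S = "S1 \<union> S2"
  have left: "(\<Sum>u\<in>{a..e}. run_weight ?S a u) = (\<Sum>u\<in>{a..e}. run_weight S1 a u)"
    using S2 by (intro sum.cong) (fastforce simp: run_weight_def)+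
  have right: "(\<Sum>u\<in>{Suc e..b}. run_weight ?S a u)
      \<le> (\<Sum>u\<in>{Suc e..b}. run_weight S2 (Suc e) u) + (if e \<in> S1 then 0 else 1)"
  proof -
    have "run_weight ?S a u = run_weight S2 (Suc e) u" if "Suc (Suc e) \<le> u" for u
      using that S1 \<open>a \<le> e\<close> by (fastforce simp: run_weight_def)
    then have "(\<Sum>u\<in>{Suc (Suc e)..b}. run_weight ?S a u) = (\<Sum>u\<in>{Suc (Suc e)..b}. run_weight S2 (Suc e) u)"
      by (intro sum.cong) auto
    moreover have "run_weight ?S a (Suc e) \<le> run_weight S2 (Suc e) (Suc e) + (if e \<in> S1 then 0 else 1)"
      using S1 S2 \<open>a \<le> e\<close> by (auto simp: run_weight_def)
    ultimately show ?thesis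
      using \<open>e < b\<close> by (simp add: sum.atLeast_Suc_atMost)
  qed
  have "{a..b} = {a..e} \<union> {Suc e..b}" using assms(1,2) by auto
  then have "(\<Sum>u\<in>{a..b}. run_weight ?S a u)
      = (\<Sum>u\<in>{a..e}. run_weight ?S a u) + (\<Sum>u\<in>{Suc e..b}. run_weight ?S a u)"
    by (simp add: sum.union_disjoint)
  moreover have "(b \<in> ?S) = (b \<in> S2)" using S1 \<open>e < b\<close> by auto
  ultimately show ?thesis
    using left right by (simp add: cover_potential_def)
qed

lemma cover_potential_cov_le:
  "valid a b T \<Longrightarrow> height T \<le> h \<Longrightarrow> cover_potential (cov a b T) a b \<le> 2 ^ h"
proof (induction T arbitrary: a b h)
  case Leaf
  then show ?case by (cases "a = b") (auto simp: cover_potential_def run_weight_def)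
next
  case (Node e L R)
  then obtain h' where h: "h = Suc h'" "height L \<le> h'" "height R \<le> h'"
    by (cases h) auto
  have "cover_potential (cov a b (Node e L R)) a b
      \<le> cover_potential (cov a e L) a e + cover_potential (cov (Suc e) b R) (Suc e) b"
    using Node.prems cov_subset by (auto intro!: cover_potential_union_le)
  also have "\<dots> \<le> 2 ^ h' + 2 ^ h'"
    using Node h by (intro add_mono) auto
  finally show ?case using h by simp
qed

text \<open>
  Scaled by d - 1, every covered vertex brings d - 1 units of
  potential, the first vertex of a run another d - 1, and every covered non-multiple of d
  consumes d. The term d - 1 - m mod d is the unused credit of a run through m.
\<close>

lemma nonmultiples_weight_le:
  assumes "0 < d"
  shows "d * card {u \<in> S \<inter> {0..m}. \<not> d dvd u} + (if m \<in> S then d - 1 - m mod d else 0)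
    \<le> (d - 1) * (\<Sum>u\<in>{0..m}. run_weight S 0 u)"
proof (induction m)
  case 0
  have "{u \<in> S \<inter> {0..0}. \<not> d dvd u} = {}" by (auto intro: gr0I)
  then show ?case by (simp add: run_weight_def)
next
  case (Suc m)
  define M where "M = card {u \<in> S \<inter> {0..m}. \<not> d dvd u}"
  define P where "P = (\<Sum>u\<in>{0..m}. run_weight S 0 u)"
  define r where "r = m mod d"
  have IH: "d * M + (if m \<in> S then d - 1 - r else 0) \<le> (d - 1) * P"
    using Suc.IH unfolding M_def P_def r_def .
  have "{u \<in> S \<inter> {0..Suc m}. \<not> d dvd u}
      = {u \<in> S \<inter> {0..m}. \<not> d dvd u} \<union> (if Suc m \<in> S \<and> \<not> d dvd Suc m then {Suc m} else {})"
    by (auto simp: le_Suc_eq)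
  then have M: "card {u \<in> S \<inter> {0..Suc m}. \<not> d dvd u} = M + (if Suc m \<in> S \<and> \<not> d dvd Suc m then 1 else 0)"
    by (simp add: M_def)
  have P: "(\<Sum>u\<in>{0..Suc m}. run_weight S 0 u) = P + run_weight S 0 (Suc m)"
    by (simp add: P_def)
  have r: "r < d" "Suc m mod d = (if Suc r = d then 0 else Suc r)"
    using assms mod_Suc[of m d] by (simp_all add: r_def)
  have dvd: "d dvd Suc m \<longleftrightarrow> Suc r = d"
    using r by (simp add: dvd_eq_mod_eq_0)
  consider (uncovered) "Suc m \<notin> S" | (run) "Suc m \<in> S" "m \<in> S" | (new_run) "Suc m \<in> S" "m \<notin> S"
    by blast
  then show ?case
  proof cases
    case uncovered
    then show ?thesis using IH unfolding M P by (simp add: run_weight_def)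
  next
    case run
    then have "run_weight S 0 (Suc m) = 1" by (simp add: run_weight_def)
    then show ?thesis
      using IH r dvd run unfolding M P by (cases "Suc r = d") (simp_all add: distrib_left)
  next
    case new_run
    then have "run_weight S 0 (Suc m) = 2" by (simp add: run_weight_def)
    then show ?thesis
      using IH r dvd new_run unfolding M P by (cases "Suc r = d") (simp_all add: distrib_left)
  qed
qed

lemma card_nonmultiples_cov_le:
  fixes c d N :: nat
  assumes T: "valid 0 N T" "height T \<le> h" and "0 < d" "d dvd N" "d dvd c"
    and height_bound: "2 ^ h \<le> c + 2"
  shows "card {v \<in> cov 0 N T. \<not> d dvd v} \<le> c div d * (d - 1)"
proof -
  define S where "S = cov 0 N T"
  define P where "P = (\<Sum>u\<in>{0..N}. run_weight S 0 u)"
  define M where "M = card {v \<in> S. \<not> d dvd v}"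
  have "S \<subseteq> {0..N}" unfolding S_def using cov_subset[OF T(1)] .
  then have set_eq: "{u \<in> S \<inter> {0..N}. \<not> d dvd u} = {v \<in> S. \<not> d dvd v}" by blast
  have "N mod d = 0" using \<open>d dvd N\<close> by simp
  then have weight: "d * M + (if N \<in> S then d - 1 else 0) \<le> (d - 1) * P"
    using nonmultiples_weight_le[OF \<open>0 < d\<close>, of S N]
    unfolding M_def P_def set_eq by (simp only: diff_zero)
  have "P + (if N \<in> S then 0 else 1) \<le> c + 2"
    using cover_potential_cov_le[OF T] height_bound unfolding cover_potential_def P_def S_def by simp
  then have "(d - 1) * (P + (if N \<in> S then 0 else 1)) \<le> (d - 1) * (c + 2)"
    by (rule mult_le_mono2)
  with weight have "d * M + (d - 1) \<le> (d - 1) * (c + 2)"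
    by (simp add: algebra_simps split: if_splits)
  moreover obtain c' where "c = d * c'" using \<open>d dvd c\<close> by blast
  moreover obtain D where "d = Suc D" using \<open>0 < d\<close> gr0_conv_Suc by blast
  ultimately have "Suc D * M < Suc D * (D * c' + 1)"
    by (simp add: algebra_simps)
  then have "M \<le> D * c'" unfolding mult_less_cancel1 by simp
  moreover have "c div d = c'" using \<open>c = d * c'\<close> \<open>0 < d\<close> by simp
  ultimately show ?thesis
    using \<open>d = Suc D\<close> by (simp add: M_def S_def mult.commute)
qed

lemma mem_ival_iff:
  assumes "v < n" "l \<le> n"
  shows "x \<in> ival v l n \<longleftrightarrow> x < n \<and> (v \<le> x \<and> x < v + l \<or> x + n < v + l)"
proof
  assume "x \<in> ival v l n"
  then obtain t where t: "v \<le> t" "t < v + l" "x = t mod n" unfolding ival_def by blast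
  show "x < n \<and> (v \<le> x \<and> x < v + l \<or> x + n < v + l)"
  proof (cases "t < n")
    case True
    then show ?thesis using t by simp
  next
    case False
    then have "x = t - n" using t assms by (simp add: le_mod_geq)
    then show ?thesis using t assms False by simp
  qed
next
  assume "x < n \<and> (v \<le> x \<and> x < v + l \<or> x + n < v + l)"
  then have "v \<le> x \<and> x < v + l \<and> x = x mod n \<or> v \<le> x + n \<and> x + n < v + l \<and> x = (x + n) mod n"
    using assms by auto
  then show "x \<in> ival v l n"
    unfolding ival_def by blast
qed

lemma ival_start_iff:
  assumes "v < n" "0 < l" "l < n"
  shows "x \<in> ival v l n \<and> (x + n - 1) mod n \<notin> ival v l n \<longleftrightarrow> x = v"
proof -
  have pred: "(x + n - 1) mod n = (if x = 0 then n - 1 else x - 1)" if "x < n"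
    using that by (simp add: mod_if)
  show ?thesis
  proof
    assume x: "x \<in> ival v l n \<and> (x + n - 1) mod n \<notin> ival v l n"
    then have "x < n" "v \<le> x \<and> x < v + l \<or> x + n < v + l"
      using assms by (simp_all add: mem_ival_iff)
    moreover have "\<not> (v \<le> x - 1 \<and> x - 1 < v + l)" if "x \<noteq> 0"
      using x pred[OF \<open>x < n\<close>] that assms by (simp add: mem_ival_iff)
    moreover have "\<not> x - 1 + n < v + l" if "x \<noteq> 0"
      using x pred[OF \<open>x < n\<close>] that assms by (simp add: mem_ival_iff)
    moreover have "x \<noteq> 0" if "x + n < v + l"
    proof
      assume "x = 0"
      then have "(x + n - 1) mod n = n - 1" using pred[OF \<open>x < n\<close>] by simp
      then show False using x that assms \<open>x = 0\<close> by (simp add: mem_ival_iff) linarith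
    qed
    ultimately show "x = v" by linarith
  next
    assume "x = v"
    then show "x \<in> ival v l n \<and> (x + n - 1) mod n \<notin> ival v l n"
      using assms pred by (simp add: mem_ival_iff) arith
  qed
qed

lemma Tv_cover_inj:
  assumes "v1 < n" "v2 < n" "0 < c" "c + 1 < n" "Tv_cover n c v1 = Tv_cover n c v2"
  shows "v1 = v2"
proof -
  obtain l1 l2 where l: "l1 \<in> {c, c + 1}" "l2 \<in> {c, c + 1}"
    and "Tv_cover n c v1 = ival v1 l1 n" "Tv_cover n c v2 = ival v2 l2 n"
    unfolding Tv_cover_def by (metis insertCI)
  then have "ival v1 l1 n = ival v2 l2 n" using assms(5) by simp
  moreover have "0 < l1" "l1 < n" "0 < l2" "l2 < n" using l assms(3,4) by auto
  ultimately show ?thesis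
    using ival_start_iff[of v1 n l1 v1] ival_start_iff[of v2 n l2 v1] assms(1,2) by simp
qed

lemma ival_subset_Tv_cover: "ival v c n \<subseteq> Tv_cover n c v"
  unfolding Tv_cover_def ival_def by auto

lemma Tv_cover_eq_ival_Suc:
  "y \<in> ival v (c + 1) n \<Longrightarrow> y \<in> {0, n - 1} \<Longrightarrow> Tv_cover n c v = ival v (c + 1) n"
  unfolding Tv_cover_def by auto

lemma le_mod_eq_cases:
  fixes x N :: nat
  assumes "x \<le> N" "x mod N = r"
  shows "x = r \<or> x = N \<and> r = 0"
  using assms by (cases "x = N") auto

lemma sum_if_dvd_eq:
  fixes K :: real
  assumes "finite S"
  shows "(\<Sum>v\<in>S. if d dvd v then 0 else K) = K * card {v \<in> S. \<not> d dvd v}"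
proof -
  have "(\<Sum>v\<in>S. if d dvd v then 0 else K) = (\<Sum>v\<in>S. if \<not> d dvd v then K else 0)"
    by (rule sum.cong) auto
  then show ?thesis
    using sum.inter_filter[OF assms, of "\<lambda>_. K" "\<lambda>v. \<not> d dvd v"] by (simp add: mult.commute)
qed

lemma card_nonmultiples_upto:
  fixes d w :: nat
  assumes "0 < d"
  shows "card {v \<in> {0..<Suc (w * d)}. \<not> d dvd v} = w * (d - 1)"
proof -
  define M where "M = {v \<in> {0..<Suc (w * d)}. d dvd v}"
  have "M = (\<lambda>q. d * q) ` {..w}"
    using assms by (auto simp: M_def less_Suc_eq_le mult.commute)
  then have "card M = Suc w"
    using assms by (simp add: card_image inj_on_def)
  moreover have "card ({0..<Suc (w * d)} - M) = card {0..<Suc (w * d)} - card M"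
    by (rule card_Diff_subset) (auto simp: M_def)
  moreover have "{v \<in> {0..<Suc (w * d)}. \<not> d dvd v} = {0..<Suc (w * d)} - M"
    by (auto simp: M_def)
  ultimately show ?thesis
    by (simp add: diff_mult_distrib2)
qed

lemma payoff_eq_sum_strategies:
  assumes "0 < n"
  shows "payoff n k x y = (\<Sum>T\<in>strategies n k. x T * (\<Sum>v\<in>C n T. y v))"
proof -
  have "(\<Sum>v\<in>{0..<n}. x T * y v * (if v \<in> C n T then 1 else 0)) = x T * (\<Sum>v\<in>C n T. y v)"
    if "T \<in> strategies n k" for T
  proof -
    have "{v \<in> {0..<n}. v \<in> C n T} = C n T" using C_subset[OF assms that] by blast
    then show ?thesis
      using sum.inter_filter[of "{0..<n}" "\<lambda>v. x T * y v" "\<lambda>v. v \<in> C n T"]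
      by (simp add: sum_distrib_left if_distrib[of "(*) _"] cong: if_cong)
  qed
  then show ?thesis unfolding payoff_def by (rule sum.cong[OF refl])
qed

lemma payoff_eq_sum_vertices:
  "payoff n k x y = (\<Sum>v\<in>{0..<n}. y v * (\<Sum>T\<in>strategies n k. if v \<in> C n T then x T else 0))"
  unfolding payoff_def by (subst sum.swap) (auto simp: sum_distrib_left intro!: sum.cong)

lemma nash_and_MAX_eq_of_bounds:
  fixes b :: real
  assumes "0 < n" and x: "prob_dist (strategies n k) x" and y: "prob_dist {0..<n} y"
    and value_le: "\<And>T. T \<in> strategies n k \<Longrightarrow> (\<Sum>v\<in>C n T. y v) \<le> b"
    and coverage_ge: "\<And>v. v < n \<Longrightarrow> b \<le> (\<Sum>T\<in>strategies n k. if v \<in> C n T then x T else 0)"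
  shows "nash n k x y \<and> (MAX T\<in>strategies n k. (\<Sum>v\<in>C n T. y v)) = b"
proof -
  let ?val = "\<lambda>T. \<Sum>v\<in>C n T. y v"
  have upper: "payoff n k x' y \<le> b" if "prob_dist (strategies n k) x'" for x'
  proof -
    have "payoff n k x' y \<le> (\<Sum>T\<in>strategies n k. x' T * b)"
      unfolding payoff_eq_sum_strategies[OF \<open>0 < n\<close>]
      using that value_le by (intro sum_mono mult_left_mono) (auto simp: prob_dist_def)
    then show ?thesis using that by (simp add: prob_dist_def flip: sum_distrib_right)
  qed
  have lower: "b \<le> payoff n k x y'" if "prob_dist {0..<n} y'" for y'
  proof -
    have "(\<Sum>v\<in>{0..<n}. y' v * b) \<le> payoff n k x y'"
      unfolding payoff_eq_sum_vertices
      using that coverage_ge by (intro sum_mono mult_left_mono) (auto simp: prob_dist_def)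
    then show ?thesis using that by (simp add: prob_dist_def flip: sum_distrib_right)
  qed
  have payoff: "payoff n k x y = b" using upper[OF x] lower[OF y] by simp
  have "(\<Sum>T\<in>strategies n k. x T * (b - ?val T)) = 0"
    using payoff x by (simp add: payoff_eq_sum_strategies[OF \<open>0 < n\<close>] right_diff_distrib
        sum_subtractf prob_dist_def flip: sum_distrib_right)
  then have slack: "x T * (b - ?val T) = 0" if "T \<in> strategies n k" for T
    using that x value_le finite_strategies
    by (subst (asm) sum_nonneg_eq_0_iff) (auto simp: prob_dist_def)
  obtain T where T: "T \<in> strategies n k" "x T \<noteq> 0"
    using x by (metis (mono_tags) prob_dist_def sum.neutral zero_neq_one)
  have "(MAX T\<in>strategies n k. ?val T) = b"
  proof (rule Max_eqI)
    show "b \<in> ?val ` strategies n k" using slack[OF T(1)] T by force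
  qed (use finite_strategies value_le in auto)
  then show ?thesis using x y upper lower payoff by (simp add: nash_def)
qed

locale greedy_cycle =
  fixes n N c d w c' :: nat
  assumes n_eq: "n = Suc N" and d_eq: "d = gcd c N" and d_gt1: "1 < d"
    and c_pos: "0 < c" and c_less: "c + 1 < N"
    and N_eq: "N = w * d" and c_eq: "c = c' * d"
begin

lemma w_pos: "0 < w"
  using N_eq c_less by (cases w) auto

lemma coprime_c'_w: "coprime c' w"
proof -
  have "d * gcd c' w = gcd (d * c') (d * w)" by (rule gcd_mult_distrib_nat)
  also have "\<dots> = gcd c N" by (simp add: c_eq N_eq mult.commute)
  also have "\<dots> = d" by (rule d_eq[symmetric])
  finally show ?thesis using d_gt1 by (simp add: coprime_iff_gcd_eq_1)
qed

lemma N_dvd_mult_c_iff: "N dvd m * c \<longleftrightarrow> w dvd m"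
proof -
  have "N dvd m * c \<longleftrightarrow> w dvd m * c'"
    using d_gt1 by (simp add: N_eq c_eq)
  also have "\<dots> \<longleftrightarrow> w dvd m"
    using coprime_c'_w by (simp add: coprime_commute coprime_dvd_mult_left_iff)
  finally show ?thesis .
qed

lemma greedy_walk_mod_eq_iff:
  assumes "a \<le> b"
  shows "(1 + b * c) mod N = (1 + a * c) mod N \<longleftrightarrow> w dvd b - a"
proof -
  have "(1 + b * c) mod N = (1 + a * c) mod N \<longleftrightarrow> N dvd (b - a) * c"
    using assms mod_eq_dvd_iff_nat[of "1 + a * c" "1 + b * c" N] by (simp add: diff_mult_distrib)
  then show ?thesis by (simp add: N_dvd_mult_c_iff)
qed

lemma greedy_walk_mod_neq_0: "(1 + m * c) mod N \<noteq> 0"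
proof
  assume "(1 + m * c) mod N = 0"
  then have "N dvd 1 + m * c" by (simp add: dvd_eq_mod_eq_0)
  moreover have "d dvd N" using N_eq by simp
  ultimately have "d dvd 1 + m * c" by (rule dvd_trans[rotated])
  moreover have "d dvd m * c" using c_eq by simp
  ultimately have "d dvd 1" using dvd_add_left_iff by blast
  then show False using d_gt1 by simp
qed

lemma gseq_eq: "gseq n c j = (1 + Suc j * c) mod N"
proof (induction j)
  case 0
  then show ?case using c_less by simp
next
  case (Suc j)
  have "gseq n c (Suc j) = ((1 + Suc j * c) mod N + c) mod N"
    using Suc n_eq by simp
  also have "\<dots> = (1 + Suc (Suc j) * c) mod N"
    by (metis add.commute add.left_commute mod_add_right_eq mult_Suc)
  finally show ?case .
qed

lemma gseq_in_01_iff: "gseq n c j \<in> {0, 1} \<longleftrightarrow> w dvd Suc j"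
  using greedy_walk_mod_neq_0[of "Suc j"] greedy_walk_mod_eq_iff[of 0 "Suc j"] c_less by (auto simp: gseq_eq)

lemma greedy_continues_iff: "(\<forall>i\<le>j. gseq n c i \<notin> {0, 1}) \<longleftrightarrow> Suc j < w"
proof
  assume continues: "\<forall>i\<le>j. gseq n c i \<notin> {0, 1}"
  show "Suc j < w"
  proof (rule ccontr)
    assume "\<not> Suc j < w"
    then have "w - 1 \<le> j" by simp
    moreover have "gseq n c (w - 1) \<in> {0, 1}" using gseq_in_01_iff[of "w - 1"] w_pos by simp
    ultimately show False using continues by blast
  qed
next
  assume "Suc j < w"
  show "\<forall>i\<le>j. gseq n c i \<notin> {0, 1}"
  proof (intro allI impI)
    fix i assume "i \<le> j"
    then have "\<not> w dvd Suc i" using \<open>Suc j < w\<close> nat_dvd_not_less[of "Suc i" w] by simp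
    then show "gseq n c i \<notin> {0, 1}" using gseq_in_01_iff by blast
  qed
qed

text \<open>
  The m-th vertex of the greedy walk is (1 + m c) mod N, except that the algorithm starts with
  T_0 instead of the unavailable T_1; its cover 0..c still contains the first block.
\<close>

definition greedy_vertex :: "nat \<Rightarrow> nat" where
  "greedy_vertex m = (if m = 0 then 0 else (1 + m * c) mod N)"

lemma greedy_vertex_0: "greedy_vertex 0 = 0"
  and greedy_vertex_Suc: "greedy_vertex (Suc j) = (1 + Suc j * c) mod N"
  by (simp_all add: greedy_vertex_def)

lemma greedy_verts_eq: "greedy_verts n c = greedy_vertex ` {..<w}"
proof -
  have "greedy_verts n c = {0} \<union> {(1 + Suc j * c) mod N | j. Suc j < w}"
    unfolding greedy_verts_def greedy_continues_iff by (simp only: gseq_eq)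
  also have "\<dots> = greedy_vertex ` {..<w}"
  proof -
    obtain w' where w: "w = Suc w'" using w_pos gr0_conv_Suc by blast
    have "greedy_vertex ` {..<w} = insert 0 ((\<lambda>j. (1 + Suc j * c) mod N) ` {..<w'})"
      unfolding w lessThan_Suc_eq_insert_0 image_insert image_image greedy_vertex_0 greedy_vertex_Suc ..
    then show ?thesis using w by auto
  qed
  finally show ?thesis .
qed

lemma greedy_vertex_range:
  assumes "m < w"
  shows "greedy_vertex m < N \<and> greedy_vertex m \<noteq> 1"
proof (cases m)
  case 0
  then show ?thesis using c_less by (simp add: greedy_vertex_def)
next
  case (Suc j)
  then have "gseq n c j \<notin> {0, 1}" using assms greedy_continues_iff by blast
  then show ?thesis using Suc c_less by (simp add: greedy_vertex_def gseq_eq)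
qed

lemma inj_on_greedy_vertex: "inj_on greedy_vertex {..<w}"
proof (rule linorder_inj_onI')
  fix a b assume "a \<in> {..<w}" "b \<in> {..<w}" "a < b"
  show "greedy_vertex a \<noteq> greedy_vertex b"
  proof (cases "a = 0")
    case True
    then show ?thesis using \<open>a < b\<close> greedy_walk_mod_neq_0[of b] by (simp add: greedy_vertex_def)
  next
    case False
    have "\<not> w dvd b - a" using \<open>a < b\<close> \<open>b \<in> {..<w}\<close> nat_dvd_not_less[of "b - a" w] by simp
    then show ?thesis using False \<open>a < b\<close> greedy_walk_mod_eq_iff[of a b] by (simp add: greedy_vertex_def)
  qed
qed

lemma greedy_vertex_mem: "m < w \<Longrightarrow> greedy_vertex m \<in> {0..<n} - {1}"
  using greedy_vertex_range[of m] n_eq by auto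

lemma block_mem_Tv_cover:
  assumes "m < w" "i < c" "x < n" "x mod N = (1 + m * c + i) mod N"
  shows "x \<in> Tv_cover n c (greedy_vertex m)"
proof (cases "m = 0")
  case True
  then have "x mod N = 1 + i" using assms c_less by simp
  then have "x = 1 + i" using le_mod_eq_cases[of x N] assms n_eq by simp
  moreover have "Tv_cover n c 0 = ival 0 (c + 1) n"
    using c_less n_eq by (intro Tv_cover_eq_ival_Suc[of 0]) (simp_all add: mem_ival_iff)
  ultimately show ?thesis
    using True assms c_less n_eq by (simp add: greedy_vertex_0 mem_ival_iff)
next
  case False
  define v where "v = greedy_vertex m"
  have v: "1 < v" "v < N" "v = (1 + m * c) mod N"
    using greedy_vertex_range[OF \<open>m < w\<close>] greedy_walk_mod_neq_0[of m] False
    by (auto simp: v_def greedy_vertex_def)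
  have x: "x mod N = (v + i) mod N" using assms(4) v(3) by (simp add: mod_add_left_eq)
  show ?thesis
  proof (cases "v + i < N")
    case True
    then have "x = v + i" using x v le_mod_eq_cases[of x N] assms n_eq by simp
    then have "x \<in> ival v c n" using True v(1,2) assms(2) n_eq c_less by (simp add: mem_ival_iff)
    then show ?thesis using ival_subset_Tv_cover v_def by blast
  next
    case False
    then have "x mod N = v + i - N" using x v(2) assms(2) c_less by (simp add: le_mod_geq)
    then have "x = v + i - N \<or> x = N" using le_mod_eq_cases[of x N] assms n_eq by auto
    moreover have "Tv_cover n c v = ival v (c + 1) n"
      using v(1,2) assms(2) n_eq c_less False
      by (intro Tv_cover_eq_ival_Suc[of N]) (simp_all add: mem_ival_iff)
    ultimately show ?thesis
      unfolding v_def[symmetric] using v(1,2) assms(2,3) n_eq c_less False by (auto simp: mem_ival_iff)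
  qed
qed

text \<open>
  The block of m consists of the positions 1 + s with m c \<le> s < (m + 1) c. Among the
  s < w c = c' N exactly the c' numbers j N + r hit u, and they lie in distinct blocks
  because c < N.
\<close>

lemma card_blocks_containing_ge:
  assumes "u < N"
  shows "c' \<le> card {m \<in> {..<w}. \<exists>i<c. (1 + m * c + i) mod N = u}"
proof -
  define r where "r = (if u = 0 then N - 1 else u - 1)"
  have r: "r < N" "(1 + r) mod N = u"
    using assms c_less by (auto simp: r_def)
  define s where "s j = j * N + r" for j
  define block where "block j = s j div c" for j
  have wc: "w * c = c' * N" using N_eq c_eq by simp
  have "inj_on block {..<c'}"
  proof (rule linorder_inj_onI')
    fix j1 j2 :: nat assume "j1 < j2"
    then have "Suc j1 * N \<le> j2 * N" by (intro mult_le_mono1) simp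
    then have "s j1 + c \<le> s j2" using r(1) c_less by (simp add: s_def)
    then have "(s j1 + c) div c \<le> s j2 div c" by (rule div_le_mono)
    then show "block j1 \<noteq> block j2" using c_pos by (simp add: block_def)
  qed
  moreover have "block ` {..<c'} \<subseteq> {m \<in> {..<w}. \<exists>i<c. (1 + m * c + i) mod N = u}"
  proof
    fix m assume "m \<in> block ` {..<c'}"
    then obtain j where j: "j < c'" "m = s j div c" by (auto simp: block_def)
    have "Suc j * N \<le> c' * N" using j(1) by (intro mult_le_mono1) simp
    then have "s j < c' * N" using r(1) by (simp add: s_def)
    then have "m < w" using j wc by (simp add: less_mult_imp_div_less)
    moreover have "1 + m * c + s j mod c = (1 + r) + j * N"
      using j(2) div_mult_mod_eq[of "s j" c] by (simp add: s_def)
    then have "(1 + m * c + s j mod c) mod N = u"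
      using r(2) by simp
    moreover have "s j mod c < c" using c_pos by simp
    ultimately show "m \<in> {m \<in> {..<w}. \<exists>i<c. (1 + m * c + i) mod N = u}"
      by blast
  qed
  ultimately have "card (block ` {..<c'}) \<le> card {m \<in> {..<w}. \<exists>i<c. (1 + m * c + i) mod N = u}"
    by (intro card_mono) auto
  then show ?thesis using \<open>inj_on block {..<c'}\<close> by (simp add: card_image)
qed

abbreviation hider :: "nat \<Rightarrow> real" where
  "hider v \<equiv> if d dvd v then 0 else 1 / (real w * (real d - 1))"

lemma hider_weight_pos: "0 < 1 / (real w * (real d - 1))"
  using w_pos d_gt1 by simp

lemma prob_dist_hider: "prob_dist {0..<n} hider"
proof -
  have "{0..<n} = {0..<Suc (w * d)}" using n_eq N_eq by simp
  then have "(\<Sum>v\<in>{0..<n}. hider v) = 1 / (real w * (real d - 1)) * real (w * (d - 1))"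
    using d_gt1 by (simp only: sum_if_dvd_eq[OF finite_atLeastLessThan] card_nonmultiples_upto)
  also have "\<dots> = 1" using w_pos d_gt1 by (simp add: of_nat_diff)
  finally show ?thesis using hider_weight_pos by (simp add: prob_dist_def)
qed

lemma sum_hider_le:
  assumes "T \<in> strategies n h" "2 ^ h \<le> c + 2"
  shows "(\<Sum>v\<in>C n T. hider v) \<le> real c / real N"
proof -
  have "card {v \<in> C n T. \<not> d dvd v} \<le> c div d * (d - 1)"
    using assms d_gt1 N_eq c_eq n_eq unfolding C_def strategies_def
    by (intro card_nonmultiples_cov_le) auto
  moreover have "c div d * (d - 1) = c' * (d - 1)" using d_gt1 c_eq by simp
  moreover have "real (c' * (d - 1)) = real c' * (real d - 1)" using d_gt1 by (simp add: of_nat_diff)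
  ultimately have card_le: "real (card {v \<in> C n T. \<not> d dvd v}) \<le> real c' * (real d - 1)"
    by (metis of_nat_le_iff)
  have "finite (C n T)"
    using C_subset[OF _ assms(1)] n_eq finite_subset by blast
  then have "(\<Sum>v\<in>C n T. hider v) = 1 / (real w * (real d - 1)) * real (card {v \<in> C n T. \<not> d dvd v})"
    by (rule sum_if_dvd_eq)
  also have "\<dots> \<le> 1 / (real w * (real d - 1)) * (real c' * (real d - 1))"
    using card_le hider_weight_pos by (intro mult_left_mono) simp_all
  also have "\<dots> = real c / real N"
    using d_gt1 by (simp add: c_eq N_eq)
  finally show ?thesis .
qed

end

locale greedy_strategies = greedy_cycle +
  fixes k :: nat and Tv :: "nat \<Rightarrow> stree"
  assumes Tv: "\<And>v. v \<in> {0..<n} - {1} \<Longrightarrow> Tv v \<in> strategies n k \<and> C n (Tv v) = Tv_cover n c v"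
begin

lemma greedy_set_eq: "greedy_set n c Tv = (\<lambda>m. Tv (greedy_vertex m)) ` {..<w}"
  unfolding greedy_set_def greedy_verts_eq image_image ..

lemma greedy_set_subset: "greedy_set n c Tv \<subseteq> strategies n k"
  using Tv greedy_vertex_mem by (auto simp: greedy_set_eq)

lemma inj_on_greedy_strategy: "inj_on (\<lambda>m. Tv (greedy_vertex m)) {..<w}"
proof (rule inj_onI)
  fix a b assume "a \<in> {..<w}" "b \<in> {..<w}" and eq: "Tv (greedy_vertex a) = Tv (greedy_vertex b)"
  then have a: "greedy_vertex a \<in> {0..<n} - {1}" and b: "greedy_vertex b \<in> {0..<n} - {1}"
    using greedy_vertex_mem by auto
  have "Tv_cover n c (greedy_vertex a) = Tv_cover n c (greedy_vertex b)"
    using Tv[OF a] Tv[OF b] eq by simp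
  then have "greedy_vertex a = greedy_vertex b"
    using a b c_pos c_less n_eq by (intro Tv_cover_inj[of _ n _ c]) auto
  then show "a = b"
    using inj_on_greedy_vertex \<open>a \<in> {..<w}\<close> \<open>b \<in> {..<w}\<close> by (auto dest: inj_onD)
qed

lemma card_greedy_set: "card (greedy_set n c Tv) = w"
  using inj_on_greedy_strategy by (simp add: greedy_set_eq card_image)

lemma card_greedy_covering_ge:
  assumes "u < n"
  shows "c' \<le> card {T \<in> greedy_set n c Tv. u \<in> C n T}"
proof -
  define M where "M = {m \<in> {..<w}. \<exists>i<c. (1 + m * c + i) mod N = u mod N}"
  have "c' \<le> card M"
    unfolding M_def using c_less by (intro card_blocks_containing_ge) simp
  also have "\<dots> = card ((\<lambda>m. Tv (greedy_vertex m)) ` M)"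
  proof -
    have "M \<subseteq> {..<w}" unfolding M_def by blast
    then show ?thesis using inj_on_subset[OF inj_on_greedy_strategy] by (simp add: card_image)
  qed
  also have "\<dots> \<le> card {T \<in> greedy_set n c Tv. u \<in> C n T}"
  proof (rule card_mono)
    show "finite {T \<in> greedy_set n c Tv. u \<in> C n T}" by (simp add: greedy_set_eq)
    show "(\<lambda>m. Tv (greedy_vertex m)) ` M \<subseteq> {T \<in> greedy_set n c Tv. u \<in> C n T}"
      using assms Tv greedy_vertex_mem block_mem_Tv_cover by (auto simp: M_def greedy_set_eq)
  qed
  finally show ?thesis .
qed

lemma prob_dist_greedy_x: "prob_dist (strategies n k) (greedy_x n c Tv)"
proof -
  have "(\<Sum>T\<in>strategies n k. greedy_x n c Tv T) = (\<Sum>T\<in>greedy_set n c Tv. 1 / real w)"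
    using greedy_set_subset finite_strategies
    by (simp add: greedy_x_def card_greedy_set sum.If_cases Int_absorb1)
  then show ?thesis
    using w_pos by (simp add: prob_dist_def greedy_x_def card_greedy_set)
qed

lemma greedy_x_coverage_ge:
  assumes "u < n"
  shows "real c / real N \<le> (\<Sum>T\<in>strategies n k. if u \<in> C n T then greedy_x n c Tv T else 0)"
proof -
  have ratio: "real c / real N = real c' / real w"
    using d_gt1 by (simp add: c_eq N_eq)
  have "(\<Sum>T\<in>strategies n k. if u \<in> C n T then greedy_x n c Tv T else 0)
      = (\<Sum>T\<in>{T \<in> greedy_set n c Tv. u \<in> C n T}. 1 / real w)"
    using greedy_set_subset finite_strategies
    by (intro sum.mono_neutral_cong_right) (auto simp: greedy_x_def card_greedy_set)
  then show ?thesis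
    using ratio card_greedy_covering_ge[OF assms] w_pos
    by (simp add: divide_right_mono)
qed

end

theorem theorem3p1:
  fixes k n :: nat and Tv :: "nat \<Rightarrow> stree"
  assumes "k \<ge> 2" and "n > 2 ^ k"
    and "gcd (2 ^ k - 2) (n - 1) > 1"
    and Tv: "\<And>v. v \<in> {0..<n} - {1} \<Longrightarrow>
               Tv v \<in> strategies n k \<and> C n (Tv v) = Tv_cover n (2 ^ k - 2) v"
  shows "let c = 2 ^ k - 2; d = gcd c (n - 1); w = (n - 1) div d;
             y = (\<lambda>v::nat. if d dvd v then 0 else 1 / (real w * (real d - 1)))
         in prob_dist {0..<n} y
            \<and> (\<forall>T\<in>strategies n k. (\<Sum>v\<in>C n T. y v) \<le> real c / real (n - 1))
            \<and> (MAX T\<in>strategies n k. (\<Sum>v\<in>C n T. y v)) = real c / real (n - 1)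
            \<and> nash n k (greedy_x n c Tv) y"
proof -
  define c where "c = (2::nat) ^ k - 2"
  define d where "d = gcd c (n - 1)"
  define w where "w = (n - 1) div d"
  have "(2::nat) ^ 2 \<le> 2 ^ k" using \<open>k \<ge> 2\<close> by (rule power_increasing) simp
  then have c: "2 ^ k = c + 2" "0 < c" by (auto simp: c_def)
  interpret greedy_strategies n "n - 1" c d w "c div d" k Tv
  proof unfold_locales
    show "n = Suc (n - 1)" "c + 1 < n - 1" using \<open>n > 2 ^ k\<close> c(1) by simp_all
    show "1 < d" using assms(3) by (simp add: d_def c_def)
    show "n - 1 = w * d" "c = c div d * d" by (simp_all add: w_def d_def)
    show "Tv v \<in> strategies n k \<and> C n (Tv v) = Tv_cover n c v" if "v \<in> {0..<n} - {1}" for v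
      using Tv[OF that] by (simp add: c_def)
  qed (simp_all add: d_def c(2))
  have "nash n k (greedy_x n c Tv) hider \<and> (MAX T\<in>strategies n k. (\<Sum>v\<in>C n T. hider v)) = real c / real (n - 1)"
    using prob_dist_greedy_x prob_dist_hider sum_hider_le greedy_x_coverage_ge c n_eq
    by (intro nash_and_MAX_eq_of_bounds) auto
  then show ?thesis
    using prob_dist_hider sum_hider_le c unfolding Let_def c_def[symmetric] d_def[symmetric] w_def[symmetric]
    by auto
qed

end
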